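(* Let $f:G\to H$, $f':G'\to H'$, $\varphi:G\to G'$, $\psi:H\to H'$ and $\xi:H'\to H$ be group homomorphisms such that $f'\circ\varphi=\psi\circ f$ and $\psi\circ\xi=\mathrm{id}_{H'}$. If $\xi$ is surjective or $f'$ does not admit a global section, then $\mathrm{sec}(f)\geq \mathrm{sec}(f')$. Moreover, if $\varphi$ is an isomorphism and $\xi$ is surjective, then $\mathrm{sec}(f)=\mathrm{sec}(f')$.
   Context: For a homomorphism $f:G\to H$ and a subgroup $L\le H$, a local section of $f$ on $L$ is a homomorphism $s:L\to G$ with $f\circ s=\mathrm{incl}_L$ (the inclusion $L\hookrightarrow H$); a global section is a local section on $L=H$. The sectional number $\mathrm{sec}(f)$ is the least positive integer $m$ such that there exist proper subgroups $H_1,\ldots,H_m$ of $H$ with $H=H_1\cup\cdots\cup H_m$ and such that $f$ admits a local section on each $H_i$; $\mathrm{sec}(f)=\infty$ if no such $m$ exists. *)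

theory Defs
  imports "HOL-Algebra.Algebra" "HOL-Library.Extended_Nat"
begin

definition local_section ::
  "('a, 'm) monoid_scheme \<Rightarrow> ('b, 'n) monoid_scheme \<Rightarrow> ('a \<Rightarrow> 'b) \<Rightarrow> 'b set \<Rightarrow> ('b \<Rightarrow> 'a) \<Rightarrow> bool"
where
  "local_section G H f L s \<longleftrightarrow>
     subgroup L H \<and> s \<in> hom (H\<lparr>carrier := L\<rparr>) G \<and> (\<forall>x\<in>L. f (s x) = x)"

definition has_local_section ::
  "('a, 'm) monoid_scheme \<Rightarrow> ('b, 'n) monoid_scheme \<Rightarrow> ('a \<Rightarrow> 'b) \<Rightarrow> 'b set \<Rightarrow> bool"
where
  "has_local_section G H f L \<longleftrightarrow> (\<exists>s. local_section G H f L s)"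

definition has_global_section ::
  "('a, 'm) monoid_scheme \<Rightarrow> ('b, 'n) monoid_scheme \<Rightarrow> ('a \<Rightarrow> 'b) \<Rightarrow> bool"
where
  "has_global_section G H f \<longleftrightarrow> has_local_section G H f (carrier H)"

definition sec_admissible ::
  "('a, 'm) monoid_scheme \<Rightarrow> ('b, 'n) monoid_scheme \<Rightarrow> ('a \<Rightarrow> 'b) \<Rightarrow> nat \<Rightarrow> bool"
where
  "sec_admissible G H f m \<longleftrightarrow> m \<ge> 1 \<and>
     (\<exists>Hs :: nat \<Rightarrow> 'b set.
        (\<forall>i<m. subgroup (Hs i) H \<and> Hs i \<noteq> carrier H \<and> has_local_section G H f (Hs i)) \<and>
        carrier H = (\<Union>i<m. Hs i))"

definition sectional_number ::
  "('a, 'm) monoid_scheme \<Rightarrow> ('b, 'n) monoid_scheme \<Rightarrow> ('a \<Rightarrow> 'b) \<Rightarrow> enat"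
where
  "sectional_number G H f =
     (if \<exists>m. sec_admissible G H f m then enat (LEAST m. sec_admissible G H f m) else \<infinity>)"

end

theory Submission
  imports Defs
begin

text \<open>Pulling a cover of H by proper subgroups with local sections back along the retraction
  \<xi> gives such a cover of H': a local section s of f on K yields the local section
  \<phi> \<circ> s \<circ> \<xi> of f' on \<xi>\<inverse>(K), since f' (\<phi> (s (\<xi> y))) = \<psi> (f (s (\<xi> y))) = \<psi> (\<xi> y) = y.
  The pulled-back subgroups stay proper when \<xi> is onto, and they are proper anyway when f'
  has no global section. If moreover \<phi> is an isomorphism and \<xi> is onto,
  then \<xi> and \<psi> are mutually inverse and the square can be reversed, giving equality.\<close>

lemma (in group_hom) subgroup_vimage:
  assumes "subgroup K H"
  shows "subgroup (carrier G \<inter> h -` K) G"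
proof (rule G.subgroupI)
  show "carrier G \<inter> h -` K \<noteq> {}"
    using subgroup.one_closed[OF assms] by auto
  show "inv a \<in> carrier G \<inter> h -` K" if "a \<in> carrier G \<inter> h -` K" for a
    using that by (simp add: subgroup.m_inv_closed[OF assms])
  show "a \<otimes> b \<in> carrier G \<inter> h -` K" if "a \<in> carrier G \<inter> h -` K" "b \<in> carrier G \<inter> h -` K" for a b
    using that by (simp add: subgroup.m_closed[OF assms])
qed auto

lemma local_section_vimage:
  assumes "group H" "group H'"
    and s: "local_section G H f K s"
    and \<phi>: "\<phi> \<in> hom G G'" and \<xi>: "\<xi> \<in> hom H' H"
    and comm: "\<forall>x\<in>carrier G. f' (\<phi> x) = \<psi> (f x)"
    and retr: "\<forall>y\<in>carrier H'. \<psi> (\<xi> y) = y"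
  shows "local_section G' H' f' (carrier H' \<inter> \<xi> -` K) (\<phi> \<circ> s \<circ> \<xi>)"
proof -
  interpret \<xi>: group_hom H' H \<xi>
    using assms(1,2) \<xi> by (simp add: group_hom_def group_hom_axioms_def)
  have K: "subgroup K H" and s_hom: "s \<in> hom (H\<lparr>carrier := K\<rparr>) G"
    and s_sec: "\<forall>x\<in>K. f (s x) = x"
    using s unfolding local_section_def by auto
  have s_carrier: "s x \<in> carrier G" if "x \<in> K" for x
    using s_hom that by (auto simp: hom_def)
  have "\<phi> \<circ> s \<circ> \<xi> \<in> hom (H'\<lparr>carrier := carrier H' \<inter> \<xi> -` K\<rparr>) G'"
  proof (rule homI)
    fix y assume "y \<in> carrier (H'\<lparr>carrier := carrier H' \<inter> \<xi> -` K\<rparr>)"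
    then show "(\<phi> \<circ> s \<circ> \<xi>) y \<in> carrier G'"
      using s_carrier hom_in_carrier[OF \<phi>] by auto
  next
    fix y z
    assume "y \<in> carrier (H'\<lparr>carrier := carrier H' \<inter> \<xi> -` K\<rparr>)"
      and "z \<in> carrier (H'\<lparr>carrier := carrier H' \<inter> \<xi> -` K\<rparr>)"
    then show "(\<phi> \<circ> s \<circ> \<xi>) (y \<otimes>\<^bsub>H'\<lparr>carrier := carrier H' \<inter> \<xi> -` K\<rparr>\<^esub> z)
        = (\<phi> \<circ> s \<circ> \<xi>) y \<otimes>\<^bsub>G'\<^esub> (\<phi> \<circ> s \<circ> \<xi>) z"
      using s_hom s_carrier \<phi> by (auto simp: hom_def)
  qed
  moreover have "f' ((\<phi> \<circ> s \<circ> \<xi>) y) = y" if "y \<in> carrier H' \<inter> \<xi> -` K" for y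
    using that comm retr s_carrier s_sec by auto
  ultimately show ?thesis
    unfolding local_section_def using \<xi>.subgroup_vimage[OF K] by blast
qed

lemma sec_admissible_vimage:
  assumes "group H" "group H'"
    and \<phi>: "\<phi> \<in> hom G G'" and \<xi>: "\<xi> \<in> hom H' H"
    and comm: "\<forall>x\<in>carrier G. f' (\<phi> x) = \<psi> (f x)"
    and retr: "\<forall>y\<in>carrier H'. \<psi> (\<xi> y) = y"
    and proper: "\<xi> ` carrier H' = carrier H \<or> \<not> has_global_section G' H' f'"
    and adm: "sec_admissible G H f m"
  shows "sec_admissible G' H' f' m"
proof -
  interpret \<xi>: group_hom H' H \<xi>
    using assms(1,2) \<xi> by (simp add: group_hom_def group_hom_axioms_def)
  obtain Hs where "m \<ge> 1"
    and Hs: "\<forall>i<m. subgroup (Hs i) H \<and> Hs i \<noteq> carrier H \<and> has_local_section G H f (Hs i)"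
    and cover: "carrier H = (\<Union>i<m. Hs i)"
    using adm unfolding sec_admissible_def by blast
  define Hs' where "Hs' i = carrier H' \<inter> \<xi> -` Hs i" for i
  have sub': "subgroup (Hs' i) H'" if "i < m" for i
    using Hs that \<xi>.subgroup_vimage unfolding Hs'_def by blast
  have sec': "has_local_section G' H' f' (Hs' i)" if "i < m" for i
    using Hs that local_section_vimage[OF assms(1,2) _ \<phi> \<xi> comm retr]
    unfolding has_local_section_def Hs'_def by blast
  have proper': "Hs' i \<noteq> carrier H'" if "i < m" for i
  proof
    assume full: "Hs' i = carrier H'"
    from proper show False
    proof
      assume "\<xi> ` carrier H' = carrier H"
      then have "carrier H = \<xi> ` Hs' i"
        using full by simp
      also have "\<dots> \<subseteq> Hs i"
        unfolding Hs'_def by blast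
      finally have "carrier H \<subseteq> Hs i" .
      with Hs \<open>i < m\<close> show False
        using subgroup.subset by blast
    next
      assume "\<not> has_global_section G' H' f'"
      with sec' \<open>i < m\<close> full show False
        unfolding has_global_section_def by metis
    qed
  qed
  have "carrier H' \<subseteq> (\<Union>i<m. Hs' i)"
  proof
    fix y assume y: "y \<in> carrier H'"
    then have "\<xi> y \<in> (\<Union>i<m. Hs i)"
      using cover by (metis \<xi>.hom_closed)
    then obtain i where "i < m" "\<xi> y \<in> Hs i"
      by blast
    with y show "y \<in> (\<Union>i<m. Hs' i)"
      unfolding Hs'_def by blast
  qed
  moreover have "(\<Union>i<m. Hs' i) \<subseteq> carrier H'"
    unfolding Hs'_def by auto
  ultimately have "carrier H' = (\<Union>i<m. Hs' i)"
    by (rule subset_antisym)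
  with \<open>m \<ge> 1\<close> sub' sec' proper' show ?thesis
    unfolding sec_admissible_def by blast
qed

lemma sectional_number_le:
  assumes "\<And>m. sec_admissible G H f m \<Longrightarrow> sec_admissible G' H' f' m"
  shows "sectional_number G' H' f' \<le> sectional_number G H f"
proof (cases "\<exists>m. sec_admissible G H f m")
  case True
  then have "sec_admissible G H f (LEAST m. sec_admissible G H f m)"
    by (rule LeastI_ex)
  then have adm': "sec_admissible G' H' f' (LEAST m. sec_admissible G H f m)"
    by (rule assms)
  then have "(LEAST m. sec_admissible G' H' f' m) \<le> (LEAST m. sec_admissible G H f m)"
    by (rule Least_le)
  with True adm' show ?thesis
    unfolding sectional_number_def by auto
qed (simp add: sectional_number_def)

lemma sectional_number_le_vimage:
  assumes "group H" "group H'"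
    and "\<phi> \<in> hom G G'" "\<xi> \<in> hom H' H"
    and "\<forall>x\<in>carrier G. f' (\<phi> x) = \<psi> (f x)"
    and "\<forall>y\<in>carrier H'. \<psi> (\<xi> y) = y"
    and "\<xi> ` carrier H' = carrier H \<or> \<not> has_global_section G' H' f'"
  shows "sectional_number G' H' f' \<le> sectional_number G H f"
  using sec_admissible_vimage[OF assms] by (rule sectional_number_le)

lemma surj_retraction_inverse:
  assumes retr: "\<forall>y\<in>B. \<psi> (\<xi> y) = y" and surj: "\<xi> ` B = A"
  shows "\<forall>x\<in>A. \<xi> (\<psi> x) = x" and "\<psi> ` A = B"
proof -
  show "\<forall>x\<in>A. \<xi> (\<psi> x) = x"
    using assms by auto
  show "\<psi> ` A = B"
    using retr surj by force
qed

theorem proposition2p9: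
  fixes G :: "('a, 'm1) monoid_scheme" and H :: "('b, 'm2) monoid_scheme"
    and G' :: "('c, 'm3) monoid_scheme" and H' :: "('d, 'm4) monoid_scheme"
    and f :: "'a \<Rightarrow> 'b" and f' :: "'c \<Rightarrow> 'd" and \<phi> :: "'a \<Rightarrow> 'c"
    and \<psi> :: "'b \<Rightarrow> 'd" and \<xi> :: "'d \<Rightarrow> 'b"
  assumes "group G" "group H" "group G'" "group H'"
    and "f \<in> hom G H" "f' \<in> hom G' H'" "\<phi> \<in> hom G G'" "\<psi> \<in> hom H H'" "\<xi> \<in> hom H' H"
    and "\<forall>x\<in>carrier G. f' (\<phi> x) = \<psi> (f x)"
    and "\<forall>y\<in>carrier H'. \<psi> (\<xi> y) = y"
  shows "(\<xi> ` carrier H' = carrier H \<or> \<not> has_global_section G' H' f'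
            \<longrightarrow> sectional_number G H f \<ge> sectional_number G' H' f')
       \<and> (\<phi> \<in> iso G G' \<and> \<xi> ` carrier H' = carrier H
            \<longrightarrow> sectional_number G H f = sectional_number G' H' f')"
proof (intro conjI impI)
  show "sectional_number G H f \<ge> sectional_number G' H' f'"
    if "\<xi> ` carrier H' = carrier H \<or> \<not> has_global_section G' H' f'"
    using sectional_number_le_vimage[OF assms(2,4,7,9-11) that] .
next
  assume iso: "\<phi> \<in> iso G G' \<and> \<xi> ` carrier H' = carrier H"
  define \<phi>' where "\<phi>' = inv_into (carrier G) \<phi>"
  have \<phi>': "\<phi>' \<in> iso G' G"
    unfolding \<phi>'_def using group.iso_set_sym[OF assms(1)] iso by blast
  have \<xi>\<psi>: "\<forall>x\<in>carrier H. \<xi> (\<psi> x) = x" and \<psi>_surj: "\<psi> ` carrier H = carrier H'"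
    using surj_retraction_inverse[where B = "carrier H'" and A = "carrier H"] assms(11) iso by auto
  have comm': "\<forall>z\<in>carrier G'. f (\<phi>' z) = \<xi> (f' z)"
  proof
    fix z assume "z \<in> carrier G'"
    then have "\<phi>' z \<in> carrier G" "\<phi> (\<phi>' z) = z"
      using iso unfolding \<phi>'_def iso_def bij_betw_def by (auto simp: inv_into_into f_inv_into_f)
    then show "f (\<phi>' z) = \<xi> (f' z)"
      using assms(5,10) \<xi>\<psi> hom_in_carrier by metis
  qed
  have "sectional_number G H f \<le> sectional_number G' H' f'"
    using sectional_number_le_vimage[OF assms(4,2) iso_imp_homomorphism[OF \<phi>'] assms(8) comm' \<xi>\<psi>]
      \<psi>_surj by blast
  moreover have "sectional_number G' H' f' \<le> sectional_number G H f"
    using sectional_number_le_vimage[OF assms(2,4,7,9-11)] iso by blast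
  ultimately show "sectional_number G H f = sectional_number G' H' f'"
    by (rule order_antisym)
qed

end
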